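(* Let $\mathcal H$ be a finite-dimensional Hilbert space and $\rho$ a density matrix on $\mathcal H$. Let $\sigma^{(1)}=\{|\psi_i\rangle\langle\psi_i|\}$ be the set of rank-1 projectors onto an orthonormal eigenbasis $\{|\psi_i\rangle\}$ of $\rho$, and let $\sigma^{(2)}$ be any exhaustive exclusive set of rank-1 projectors. Then $\mathcal S=\{\rho,\sigma^{(1)},\sigma^{(2)}\}$ is medium consistent, and there are no exhaustive exclusive sets of projectors $\tau^{(1)},\dots,\tau^{(n)}$ such that $\mathcal S'=\{\rho,\sigma^{(1)},\tau^{(1)},\dots,\tau^{(n)},\sigma^{(2)}\}$ is a nontrivial consistent extension of $\mathcal S$.
   Context: A set of projectors $\sigma=\{P_\alpha\}_{\alpha=1,\dots,m}$ on $\mathcal H$ is exhaustive and exclusive if $\sum_\alpha P_\alpha=\mathbb 1$ and $P_\alpha P_\beta=\delta_{\alpha\beta}P_\alpha$. A family of histories $\{\rho,\sigma^{(1)},\dots,\sigma^{(n)}\}$ consists of an initial density matrix $\rho$ and exhaustive exclusive sets $\sigma^{(j)}=\{P^{(j)}_{\alpha_j}\}$ (Heisenberg-picture projectors at successive times $t_1<\dots<t_n$). A history is a tuple $\alpha=(\alpha_1,\dots,\alpha_n)$ with history operator $C_\alpha=P^{(1)}_{\alpha_1}\cdots P^{(n)}_{\alpha_n}$, probability $Pr(\alpha)=\mathrm{Tr}\{C_\alpha^\dagger\rho C_\alpha\}$ and coherence function $D(\alpha;\beta)=\mathrm{Tr}\{C_\alpha^\dagger\rho C_\beta\}$. The family is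 (medium) consistent if $D(\alpha;\beta)=\delta_{\alpha\beta}Pr(\alpha)$ for all histories $\alpha,\beta$. Given a consistent family $\mathcal S=\{\rho,\sigma^{(1)},\dots,\sigma^{(n)}\}$, a family obtained by inserting additional exhaustive exclusive sets of projectors at intermediate times (before the last set $\sigma^{(n)}$) is a consistent extension of $\mathcal S$ if it is consistent; the extension is trivial if for every history $(\alpha_1,\dots,\alpha_n)$ of $\mathcal S$ there is at most one history of the extended family with nonzero probability that agrees with it at the original times, and nontrivial otherwise. *)

theory Defs
  imports "Jordan_Normal_Form.Schur_Decomposition" "Jordan_Normal_Form.DL_Rank"
begin

definition mtrace :: "complex mat \<Rightarrow> complex" where
  "mtrace A = (\<Sum>i<dim_row A. A $$ (i, i))"

definition msum :: "nat \<Rightarrow> complex mat list \<Rightarrow> complex mat" where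
  "msum d Ps = foldr (+) Ps (0\<^sub>m d d)"

definition projector :: "nat \<Rightarrow> complex mat \<Rightarrow> bool" where
  "projector d P \<longleftrightarrow> P \<in> carrier_mat d d \<and> P * P = P \<and> mat_adjoint P = P"

definition rank1_projector :: "nat \<Rightarrow> complex mat \<Rightarrow> bool" where
  "rank1_projector d P \<longleftrightarrow> projector d P \<and> vec_space.rank d P = 1"

definition ee_set :: "nat \<Rightarrow> complex mat list \<Rightarrow> bool" where
  "ee_set d \<sigma> \<longleftrightarrow> (\<forall>P\<in>set \<sigma>. projector d P) \<and> msum d \<sigma> = 1\<^sub>m d \<and>
     (\<forall>a<length \<sigma>. \<forall>b<length \<sigma>. \<sigma> ! a * \<sigma> ! b = (if a = b then \<sigma> ! a else 0\<^sub>m d d))"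

definition density :: "nat \<Rightarrow> complex mat \<Rightarrow> bool" where
  "density d \<rho> \<longleftrightarrow> \<rho> \<in> carrier_mat d d \<and> mat_adjoint \<rho> = \<rho> \<and>
     (\<forall>v\<in>carrier_vec d. 0 \<le> Re ((\<rho> *\<^sub>v v) \<bullet>c v)) \<and> mtrace \<rho> = 1"

definition outer :: "complex vec \<Rightarrow> complex mat" where
  "outer v = mat (dim_vec v) (dim_vec v) (\<lambda>(i, j). v $ i * cnj (v $ j))"

text \<open>A family is given by a list of sets sigma(1),...,sigma(n) (the initial state is separate).
 A history is a list of indices.\<close>
definition histories :: "complex mat list list \<Rightarrow> nat list set" where
  "histories fam = {\<alpha>. length \<alpha> = length fam \<and> (\<forall>j<length fam. \<alpha> ! j < length (fam ! j))}"

definition hist_op :: "nat \<Rightarrow> complex mat list list \<Rightarrow> nat list \<Rightarrow> complex mat" where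
  "hist_op d fam \<alpha> = foldr (*) (map (\<lambda>j. fam ! j ! (\<alpha> ! j)) [0..<length fam]) (1\<^sub>m d)"

definition coherence :: "nat \<Rightarrow> complex mat \<Rightarrow> complex mat list list \<Rightarrow> nat list \<Rightarrow> nat list \<Rightarrow> complex" where
  "coherence d \<rho> fam \<alpha> \<beta> = mtrace (mat_adjoint (hist_op d fam \<alpha>) * \<rho> * hist_op d fam \<beta>)"

definition hist_prob :: "nat \<Rightarrow> complex mat \<Rightarrow> complex mat list list \<Rightarrow> nat list \<Rightarrow> complex" where
  "hist_prob d \<rho> fam \<alpha> = mtrace (mat_adjoint (hist_op d fam \<alpha>) * \<rho> * hist_op d fam \<alpha>)"

definition consistent :: "nat \<Rightarrow> complex mat \<Rightarrow> complex mat list list \<Rightarrow> bool" where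
  "consistent d \<rho> fam \<longleftrightarrow> (\<forall>\<alpha>\<in>histories fam. \<forall>\<beta>\<in>histories fam.
     coherence d \<rho> fam \<alpha> \<beta> = (if \<alpha> = \<beta> then hist_prob d \<rho> fam \<alpha> else 0))"

text \<open>Triviality of an extension fam' of fam, where idx lists the positions (times) in fam'
 of the original sets of fam.\<close>
definition trivial_ext :: "nat \<Rightarrow> complex mat \<Rightarrow> complex mat list list \<Rightarrow> complex mat list list \<Rightarrow> nat list \<Rightarrow> bool" where
  "trivial_ext d \<rho> fam fam' idx \<longleftrightarrow> (\<forall>\<alpha>\<in>histories fam. \<forall>\<beta>1\<in>histories fam'. \<forall>\<beta>2\<in>histories fam'.
     hist_prob d \<rho> fam' \<beta>1 \<noteq> 0 \<and> hist_prob d \<rho> fam' \<beta>2 \<noteq> 0 \<and>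
     map (\<lambda>k. \<beta>1 ! (idx ! k)) [0..<length fam] = \<alpha> \<and>
     map (\<lambda>k. \<beta>2 ! (idx ! k)) [0..<length fam] = \<alpha> \<longrightarrow> \<beta>1 = \<beta>2)"

definition nontrivial_consistent_ext :: "nat \<Rightarrow> complex mat \<Rightarrow> complex mat list list \<Rightarrow> complex mat list list \<Rightarrow> nat list \<Rightarrow> bool" where
  "nontrivial_consistent_ext d \<rho> fam fam' idx \<longleftrightarrow> consistent d \<rho> fam' \<and> \<not> trivial_ext d \<rho> fam fam' idx"

end

theory Submission
  imports Defs
begin

(* Since rho is diagonal in the basis psi, |psi_i><psi_i| rho |psi_j><psi_j| = 0 for i ~= j;
   together with the orthogonality of the projectors in sigma2 this kills every off-diagonal
   coherence of the two-time family.
   In an extension, a history starting with |psi_i><psi_i| and ending with a rank-one projector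
   |w><z| has history operator |psi_i><psi_i| T |w><z| = <psi_i|T|w> |psi_i><z|, so all histories
   with the same endpoints are multiples s_x M of a single operator M.  Their coherences
   conj(s_x) s_y Tr(M^* rho M) form a rank-one matrix: two distinct such histories of non-zero
   probability have non-zero mutual coherence, which consistency forbids. *)

lemma mat_adjoint_dim [simp]:
  "dim_row (mat_adjoint A) = dim_col A" "dim_col (mat_adjoint A) = dim_row A"
  unfolding mat_adjoint_def by auto

lemma mat_adjoint_carrier [simp]: "A \<in> carrier_mat n m \<Longrightarrow> mat_adjoint A \<in> carrier_mat m n"
  unfolding mat_adjoint_def by auto

lemma mat_adjoint_index [simp]:
  fixes A :: "complex mat"
  shows "i < dim_col A \<Longrightarrow> j < dim_row A \<Longrightarrow> mat_adjoint A $$ (i, j) = cnj (A $$ (j, i))"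
  unfolding mat_adjoint_def by (simp add: mat_of_rows_index)

lemma mat_adjoint_mult:
  fixes A B :: "complex mat"
  assumes "A \<in> carrier_mat n m" "B \<in> carrier_mat m p"
  shows "mat_adjoint (A * B) = mat_adjoint B * mat_adjoint A"
proof (rule eq_matI)
  fix i j assume "i < dim_row (mat_adjoint B * mat_adjoint A)" "j < dim_col (mat_adjoint B * mat_adjoint A)"
  then have i: "i < p" and j: "j < n" using assms by auto
  have "mat_adjoint (A * B) $$ (i, j) = (\<Sum>k<m. cnj (B $$ (k, i)) * cnj (A $$ (j, k)))"
    using i j assms by (simp add: scalar_prod_def atLeast0LessThan mult.commute)
  also have "\<dots> = (mat_adjoint B * mat_adjoint A) $$ (i, j)"
    using i j assms by (simp add: scalar_prod_def atLeast0LessThan)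
  finally show "mat_adjoint (A * B) $$ (i, j) = (mat_adjoint B * mat_adjoint A) $$ (i, j)" .
qed (use assms in auto)

lemma mat_adjoint_smult: "mat_adjoint (c \<cdot>\<^sub>m A) = cnj c \<cdot>\<^sub>m mat_adjoint (A :: complex mat)"
  by (rule eq_matI) auto

lemma mtrace_mult_comm:
  assumes "A \<in> carrier_mat n m" "B \<in> carrier_mat m n"
  shows "mtrace (A * B) = mtrace (B * A)"
proof -
  have "mtrace (A * B) = (\<Sum>i<n. \<Sum>k<m. A $$ (i, k) * B $$ (k, i))"
    using assms by (simp add: mtrace_def scalar_prod_def atLeast0LessThan)
  also have "\<dots> = (\<Sum>k<m. \<Sum>i<n. B $$ (k, i) * A $$ (i, k))"
    by (subst sum.swap) (simp add: mult.commute)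
  also have "\<dots> = mtrace (B * A)"
    using assms by (simp add: mtrace_def scalar_prod_def atLeast0LessThan)
  finally show ?thesis .
qed

lemma mtrace_smult: "A \<in> carrier_mat n n \<Longrightarrow> mtrace (c \<cdot>\<^sub>m A) = c * mtrace A"
  by (simp add: mtrace_def sum_distrib_left)

lemma mtrace_zero [simp]: "mtrace (0\<^sub>m n n) = 0"
  by (simp add: mtrace_def)

definition ketbra :: "complex vec \<Rightarrow> complex vec \<Rightarrow> complex mat" where
  "ketbra u v = mat (dim_vec u) (dim_vec v) (\<lambda>(i, j). u $ i * cnj (v $ j))"

lemma outer_eq_ketbra: "outer v = ketbra v v"
  by (simp add: outer_def ketbra_def)

lemma ketbra_carrier [simp]: "u \<in> carrier_vec n \<Longrightarrow> v \<in> carrier_vec m \<Longrightarrow> ketbra u v \<in> carrier_mat n m"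
  by (simp add: ketbra_def)

lemma mat_adjoint_ketbra: "mat_adjoint (ketbra u v) = ketbra v u"
  by (rule eq_matI) (auto simp: ketbra_def)

lemma mult_ketbra: "A \<in> carrier_mat n m \<Longrightarrow> w \<in> carrier_vec m \<Longrightarrow> A * ketbra w z = ketbra (A *\<^sub>v w) z"
  by (rule eq_matI) (auto simp: ketbra_def scalar_prod_def sum_distrib_right mult.assoc)

lemma ketbra_mult_ketbra:
  "v \<in> carrier_vec m \<Longrightarrow> w \<in> carrier_vec m \<Longrightarrow> ketbra u v * ketbra w z = (w \<bullet>c v) \<cdot>\<^sub>m ketbra u z"
  by (rule eq_matI) (auto simp: ketbra_def scalar_prod_def sum_distrib_left sum_distrib_right mult_ac)

lemma ketbra_sandwich:
  assumes "u \<in> carrier_vec n" "v \<in> carrier_vec n" "w \<in> carrier_vec n" "z \<in> carrier_vec n"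
    and "M \<in> carrier_mat n n"
  shows "ketbra u v * M * ketbra w z = ((M *\<^sub>v w) \<bullet>c v) \<cdot>\<^sub>m ketbra u z"
proof -
  have "ketbra u v * M * ketbra w z = ketbra u v * (M * ketbra w z)"
    using assms by (simp add: assoc_mult_mat[of _ n n _ n _ n])
  then show ?thesis
    using assms by (simp add: mult_ketbra ketbra_mult_ketbra)
qed

lemma projector_outer:
  assumes "u \<in> carrier_vec n" "u \<bullet>c u = 1"
  shows "projector n (outer u)"
proof -
  have "outer u * outer u = 1 \<cdot>\<^sub>m outer u"
    using assms by (simp add: outer_eq_ketbra ketbra_mult_ketbra)
  also have "\<dots> = outer u" by (rule eq_matI) auto
  finally show ?thesis using assms by (simp add: projector_def outer_eq_ketbra mat_adjoint_ketbra)
qed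

lemma outer_sandwich_orthogonal_eigenvector:
  assumes "u \<in> carrier_vec n" "v \<in> carrier_vec n" "\<rho> \<in> carrier_mat n n"
    and "\<rho> *\<^sub>v v = c \<cdot>\<^sub>v v" "v \<bullet>c u = 0"
  shows "outer u * \<rho> * outer v = 0\<^sub>m n n"
proof -
  have "outer u * \<rho> * outer v = ((\<rho> *\<^sub>v v) \<bullet>c u) \<cdot>\<^sub>m ketbra u v"
    using assms by (simp add: outer_eq_ketbra ketbra_sandwich)
  also have "(\<rho> *\<^sub>v v) \<bullet>c u = 0" using assms by simp
  also have "0 \<cdot>\<^sub>m ketbra u v = 0\<^sub>m n n" by (rule eq_matI) (use assms in \<open>auto simp: ketbra_def\<close>)
  finally show ?thesis .
qed

context vec_space
begin

lemma rank_le_1_col_in_span: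
  assumes A: "A \<in> carrier_mat n nc" and rk: "rank A \<le> 1"
    and k: "k < nc" "col A k \<noteq> 0\<^sub>v n" and c: "c < nc"
  shows "col A c \<in> span {col A k}"
proof (rule ccontr)
  assume notin: "col A c \<notin> span {col A k}"
  have carr: "col A k \<in> carrier_vec n" "col A c \<in> carrier_vec n" using A k c by auto
  have "lin_indpt {col A k}" using carr k(2) by (simp add: lindep_span span_empty)
  moreover have new: "col A c \<notin> {col A k}" using notin span_self[OF carr(1)] by auto
  ultimately have indpt: "lin_indpt ({col A k} \<union> {col A c})"
    using lin_dep_iff_in_span[of "{col A k}" "col A c"] notin carr by auto
  have "{col A k} \<union> {col A c} \<subseteq> set (cols A)" using A k c by (auto simp: cols_def)
  then have "card ({col A k} \<union> {col A c}) \<le> rank A" using rank_ge_card_indpt[OF A _ indpt] by blast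
  then show False using rk new by auto
qed

lemma span_singleton_smult: "\<phi> \<in> carrier_vec n \<Longrightarrow> w \<in> span {\<phi>} \<Longrightarrow> \<exists>s. w = s \<cdot>\<^sub>v \<phi>"
  using finite_in_span[of "{\<phi>}" w] by (auto simp: lincomb_def)

lemma rank_le_1_imp_product_entries:
  assumes A: "A \<in> carrier_mat n nc" and rk: "rank A \<le> 1"
  shows "\<exists>f g. \<forall>r<n. \<forall>c<nc. A $$ (r, c) = f r * g c"
proof (cases "\<exists>k<nc. col A k \<noteq> 0\<^sub>v n")
  case False
  have "A $$ (r, c) = 0" if "r < n" "c < nc" for r c
  proof -
    have "A $$ (r, c) = col A c $ r" using A that by simp
    then show ?thesis using False that by simp
  qed
  then show ?thesis by (intro exI[of _ "\<lambda>_. 0"]) simp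
next
  case True
  then obtain k where k: "k < nc" "col A k \<noteq> 0\<^sub>v n" by blast
  have "\<exists>s. col A c = s \<cdot>\<^sub>v col A k" if "c < nc" for c
    using span_singleton_smult rank_le_1_col_in_span[OF A rk k that] A k by auto
  then obtain g where g: "\<And>c. c < nc \<Longrightarrow> col A c = g c \<cdot>\<^sub>v col A k" by metis
  have "A $$ (r, c) = col A k $ r * g c" if "r < n" "c < nc" for r c
  proof -
    have "A $$ (r, c) = col A c $ r" using A that by simp
    also have "\<dots> = g c * col A k $ r" using g[of c] A that by simp
    finally show ?thesis by (simp add: mult.commute)
  qed
  then show ?thesis by (intro exI[of _ "\<lambda>r. col A k $ r"] exI[of _ g]) simp
qed

end

lemma rank1_projector_ketbra:
  assumes "rank1_projector d P"
  shows "\<exists>u v. u \<in> carrier_vec d \<and> v \<in> carrier_vec d \<and> P = ketbra u v"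
proof -
  have P: "P \<in> carrier_mat d d" and "vec_space.rank d P = 1"
    using assms by (auto simp: rank1_projector_def projector_def)
  then obtain f g where fg: "\<forall>r<d. \<forall>c<d. P $$ (r, c) = f r * g c"
    using vec_space.rank_le_1_imp_product_entries[OF P] by auto
  have "P = ketbra (vec d f) (vec d (\<lambda>c. cnj (g c)))"
    using P fg by (intro eq_matI) (auto simp: ketbra_def)
  then show ?thesis using vec_carrier by blast
qed

lemma histories_Nil [simp]: "histories [] = {[]}"
  by (simp add: histories_def)

lemma histories_Cons: "histories (S # F) = {a # x | a x. a < length S \<and> x \<in> histories F}"
  by (auto simp: histories_def All_less_Suc2 length_Suc_conv)

lemma append_in_histories_iff:
  "length x = length F \<Longrightarrow> x @ y \<in> histories (F @ G) \<longleftrightarrow> x \<in> histories F \<and> y \<in> histories G"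
  by (auto simp: histories_def nth_append) (metis add_diff_cancel_left' add_less_cancel_left not_add_less1)

lemma histories_Cons_snocE:
  assumes "\<beta> \<in> histories (A # Fs @ [B])"
  obtains a x b where "\<beta> = a # x @ [b]" "a < length A" "x \<in> histories Fs" "b < length B"
proof -
  obtain a z where \<beta>: "\<beta> = a # z" "a < length A" and z: "z \<in> histories (Fs @ [B])"
    using assms by (auto simp: histories_Cons)
  then obtain x b where "z = x @ [b]" "length x = length Fs"
    by (auto simp: histories_def length_Suc_conv_rev)
  with \<beta> z show ?thesis
    using that by (auto simp: append_in_histories_iff histories_Cons)
qed

lemma hist_op_Nil [simp]: "hist_op d [] x = 1\<^sub>m d"
  by (simp add: hist_op_def)

lemma hist_op_Cons: "hist_op d (S # F) (a # x) = S ! a * hist_op d F x"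
  unfolding hist_op_def by (simp add: upt_conv_Cons map_Suc_upt[symmetric] o_def del: upt_Suc)

lemma hist_op_carrier:
  "x \<in> histories F \<Longrightarrow> \<forall>S\<in>set F. set S \<subseteq> carrier_mat d d \<Longrightarrow> hist_op d F x \<in> carrier_mat d d"
proof (induction F arbitrary: x)
  case (Cons S F)
  then obtain a x' where x: "x = a # x'" "a < length S" "x' \<in> histories F"
    by (auto simp: histories_Cons)
  then have "S ! a \<in> carrier_mat d d" using Cons.prems(2) by auto
  with Cons x show ?case by (simp add: hist_op_Cons)
qed simp

lemma hist_op_append:
  assumes "x \<in> histories F" "y \<in> histories G" "\<forall>S\<in>set (F @ G). set S \<subseteq> carrier_mat d d"
  shows "hist_op d (F @ G) (x @ y) = hist_op d F x * hist_op d G y"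
  using assms
proof (induction F arbitrary: x)
  case Nil
  then show ?case using hist_op_carrier[of y G d] by simp
next
  case (Cons S F)
  then obtain a x' where x: "x = a # x'" "a < length S" "x' \<in> histories F"
    by (auto simp: histories_Cons)
  have carr: "S ! a \<in> carrier_mat d d" "hist_op d F x' \<in> carrier_mat d d" "hist_op d G y \<in> carrier_mat d d"
    using Cons.prems x by (auto intro!: hist_op_carrier)
  have "hist_op d ((S # F) @ G) (x @ y) = S ! a * (hist_op d F x' * hist_op d G y)"
    using Cons x by (simp add: hist_op_Cons)
  also have "\<dots> = hist_op d (S # F) x * hist_op d G y"
    using carr x by (simp add: hist_op_Cons assoc_mult_mat[of _ d d _ d _ d])
  finally show ?case .
qed

lemma hist_op_Cons_snoc:
  assumes "a < length A" "x \<in> histories Fs" "b < length B"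
    and "\<forall>S\<in>set (A # Fs @ [B]). set S \<subseteq> carrier_mat d d"
  shows "hist_op d (A # Fs @ [B]) (a # x @ [b]) = A ! a * hist_op d Fs x * B ! b"
proof -
  have carr: "A ! a \<in> carrier_mat d d" "hist_op d Fs x \<in> carrier_mat d d" "B ! b \<in> carrier_mat d d"
    using assms by (auto intro!: hist_op_carrier)
  have "[b] \<in> histories [B]" using assms(3) by (simp add: histories_Cons)
  then have "hist_op d (Fs @ [B]) (x @ [b]) = hist_op d Fs x * B ! b"
    using assms carr by (simp add: hist_op_append hist_op_Cons)
  then show ?thesis
    using carr by (simp add: hist_op_Cons assoc_mult_mat[of _ d d _ d _ d])
qed

lemma hist_prob_eq_coherence: "hist_prob d \<rho> F x = coherence d \<rho> F x x"
  by (simp add: hist_prob_def coherence_def)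

lemma coherence_proportional:
  assumes "\<rho> \<in> carrier_mat d d" "M \<in> carrier_mat d d"
    and "hist_op d F x = s \<cdot>\<^sub>m M" "hist_op d F y = t \<cdot>\<^sub>m M"
  shows "coherence d \<rho> F x y = cnj s * t * mtrace (mat_adjoint M * \<rho> * M)"
proof -
  let ?K = "mat_adjoint M * \<rho> * M"
  have carr: "mat_adjoint M * \<rho> \<in> carrier_mat d d" "?K \<in> carrier_mat d d"
    using assms(1,2) by (metis mat_adjoint_carrier mult_carrier_mat)+
  then have "mat_adjoint (s \<cdot>\<^sub>m M) * \<rho> * (t \<cdot>\<^sub>m M) = t \<cdot>\<^sub>m (cnj s \<cdot>\<^sub>m ?K)"
    using assms by (simp add: mat_adjoint_smult mult_smult_assoc_mat[of _ d d _ d]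
        mult_smult_distrib[of _ d d _ d])
  then show ?thesis
    using assms carr by (simp add: coherence_def mtrace_smult[of _ d])
qed

lemma proportional_histories_interfere:
  assumes "\<rho> \<in> carrier_mat d d" "M \<in> carrier_mat d d"
    and "hist_op d F x = s \<cdot>\<^sub>m M" "hist_op d F y = t \<cdot>\<^sub>m M"
    and "hist_prob d \<rho> F x \<noteq> 0" "hist_prob d \<rho> F y \<noteq> 0"
  shows "coherence d \<rho> F x y \<noteq> 0"
proof -
  let ?K = "mtrace (mat_adjoint M * \<rho> * M)"
  have "cnj s * s * ?K \<noteq> 0" "cnj t * t * ?K \<noteq> 0"
    using assms coherence_proportional[OF assms(1,2)] by (auto simp: hist_prob_eq_coherence)
  then show ?thesis using coherence_proportional[OF assms(1-4)] by simp
qed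

lemma consistent_two_set_family:
  assumes \<rho>: "\<rho> \<in> carrier_mat d d"
    and S: "\<forall>P\<in>set S. projector d P" and T: "\<forall>Q\<in>set T. projector d Q"
    and T_orth: "\<forall>a<length T. \<forall>b<length T. a \<noteq> b \<longrightarrow> T ! a * T ! b = 0\<^sub>m d d"
    and S_decoherent: "\<forall>i<length S. \<forall>j<length S. i \<noteq> j \<longrightarrow> S ! i * \<rho> * S ! j = 0\<^sub>m d d"
  shows "consistent d \<rho> [S, T]"
  unfolding consistent_def
proof (intro ballI)
  fix \<alpha> \<beta> assume "\<alpha> \<in> histories [S, T]" "\<beta> \<in> histories [S, T]"
  then obtain i a j b where \<alpha>: "\<alpha> = [i, a]" "i < length S" "a < length T"
    and \<beta>: "\<beta> = [j, b]" "j < length S" "b < length T"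
    by (auto simp: histories_Cons)
  have proj: "projector d (S ! i)" "projector d (T ! a)" "projector d (S ! j)" "projector d (T ! b)"
    using S T \<alpha> \<beta> by auto
  then have carr: "S ! i \<in> carrier_mat d d" "T ! a \<in> carrier_mat d d"
    "S ! j \<in> carrier_mat d d" "T ! b \<in> carrier_mat d d"
    by (simp_all add: projector_def)
  let ?X = "S ! i * \<rho> * S ! j"
  have X: "?X \<in> carrier_mat d d" using carr \<rho> by simp
  have "coherence d \<rho> [S, T] \<alpha> \<beta> = mtrace (T ! a * (?X * T ! b))"
    using proj carr \<rho> \<alpha> \<beta>
    by (simp add: coherence_def hist_op_Cons mat_adjoint_mult[of _ d d] projector_def
        assoc_mult_mat[of _ d d _ d _ d])
  also have "\<dots> = mtrace (?X * T ! b * T ! a)"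
    by (rule mtrace_mult_comm[of _ d d]) (use carr X in auto)
  also have "\<dots> = mtrace (?X * (T ! b * T ! a))"
    using carr X by (simp add: assoc_mult_mat[of _ d d _ d _ d])
  finally have coh: "coherence d \<rho> [S, T] \<alpha> \<beta> = mtrace (?X * (T ! b * T ! a))" .
  show "coherence d \<rho> [S, T] \<alpha> \<beta> = (if \<alpha> = \<beta> then hist_prob d \<rho> [S, T] \<alpha> else 0)"
  proof (cases "\<alpha> = \<beta>")
    case False
    then have "i \<noteq> j \<or> a \<noteq> b" using \<alpha> \<beta> by auto
    then have "?X = 0\<^sub>m d d \<or> T ! b * T ! a = 0\<^sub>m d d"
      using S_decoherent T_orth \<alpha> \<beta> by auto
    then have "?X * (T ! b * T ! a) = 0\<^sub>m d d"
      using carr X by auto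
    then show ?thesis using coh False by simp
  qed (simp add: hist_prob_eq_coherence)
qed

lemma consistent_eigenbasis_family:
  assumes \<rho>: "\<rho> \<in> carrier_mat d d"
    and "length \<psi> = d"
    and \<psi>: "\<forall>i<d. \<psi> ! i \<in> carrier_vec d"
    and orthonormal: "\<forall>i<d. \<forall>j<d. \<psi> ! i \<bullet>c \<psi> ! j = (if i = j then 1 else 0)"
    and eigen: "\<forall>i<d. \<exists>c. \<rho> *\<^sub>v (\<psi> ! i) = c \<cdot>\<^sub>v (\<psi> ! i)"
    and "ee_set d \<sigma>"
  shows "consistent d \<rho> [map outer \<psi>, \<sigma>]"
proof (rule consistent_two_set_family[OF \<rho>])
  show "\<forall>P\<in>set (map outer \<psi>). projector d P"
    using assms(2) \<psi> orthonormal by (auto simp: in_set_conv_nth intro!: projector_outer)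
  have "outer (\<psi> ! i) * \<rho> * outer (\<psi> ! j) = 0\<^sub>m d d" if ij: "i < d" "j < d" "i \<noteq> j" for i j
  proof -
    obtain c where "\<rho> *\<^sub>v \<psi> ! j = c \<cdot>\<^sub>v \<psi> ! j" using eigen ij(2) by blast
    then show ?thesis
      using outer_sandwich_orthogonal_eigenvector[of _ d] \<psi> \<rho> orthonormal ij by simp
  qed
  then show "\<forall>i<length (map outer \<psi>). \<forall>j<length (map outer \<psi>). i \<noteq> j \<longrightarrow>
      map outer \<psi> ! i * \<rho> * map outer \<psi> ! j = 0\<^sub>m d d"
    using assms(2) by simp
qed (use assms(6) in \<open>auto simp: ee_set_def\<close>)

lemma consistent_history_determined_by_ends:
  assumes \<rho>: "\<rho> \<in> carrier_mat d d"
    and A: "\<forall>P\<in>set A. \<exists>u v. u \<in> carrier_vec d \<and> v \<in> carrier_vec d \<and> P = ketbra u v"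
    and B: "\<forall>P\<in>set B. \<exists>u v. u \<in> carrier_vec d \<and> v \<in> carrier_vec d \<and> P = ketbra u v"
    and Fs: "\<forall>S\<in>set Fs. set S \<subseteq> carrier_mat d d"
    and cons: "consistent d \<rho> (A # Fs @ [B])"
    and a: "a < length A" and b: "b < length B" and x: "x \<in> histories Fs" and y: "y \<in> histories Fs"
    and prob: "hist_prob d \<rho> (A # Fs @ [B]) (a # x @ [b]) \<noteq> 0"
      "hist_prob d \<rho> (A # Fs @ [B]) (a # y @ [b]) \<noteq> 0"
  shows "x = y"
proof -
  let ?F = "A # Fs @ [B]"
  have carrier: "\<forall>S\<in>set ?F. set S \<subseteq> carrier_mat d d"
    using A B Fs by fastforce
  obtain u v where uv: "u \<in> carrier_vec d" "v \<in> carrier_vec d" "A ! a = ketbra u v"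
    using A a by (meson nth_mem)
  obtain w z where wz: "w \<in> carrier_vec d" "z \<in> carrier_vec d" "B ! b = ketbra w z"
    using B b by (meson nth_mem)
  have hist: "hist_op d ?F (a # x' @ [b]) = ((hist_op d Fs x' *\<^sub>v w) \<bullet>c v) \<cdot>\<^sub>m ketbra u z"
    if "x' \<in> histories Fs" for x'
    using hist_op_Cons_snoc[OF a that b carrier] ketbra_sandwich[OF uv(1,2) wz(1,2)]
      hist_op_carrier[OF that Fs] uv(3) wz(3) by simp
  have "length x = length Fs" "length y = length Fs"
    using x y by (simp_all add: histories_def)
  then have mem: "a # x @ [b] \<in> histories ?F" "a # y @ [b] \<in> histories ?F"
    using a b x y by (simp_all add: histories_Cons append_in_histories_iff)
  have "coherence d \<rho> ?F (a # x @ [b]) (a # y @ [b]) \<noteq> 0"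
    using proportional_histories_interfere[OF \<rho> _ hist[OF x] hist[OF y] prob] uv wz by simp
  with cons mem show "x = y"
    by (auto simp: consistent_def split: if_split_asm)
qed

lemma consistent_extension_between_rank_one_sets_trivial:
  assumes \<rho>: "\<rho> \<in> carrier_mat d d"
    and A: "\<forall>P\<in>set A. \<exists>u v. u \<in> carrier_vec d \<and> v \<in> carrier_vec d \<and> P = ketbra u v"
    and B: "\<forall>P\<in>set B. \<exists>u v. u \<in> carrier_vec d \<and> v \<in> carrier_vec d \<and> P = ketbra u v"
    and Fs: "\<forall>S\<in>set Fs. set S \<subseteq> carrier_mat d d"
    and cons: "consistent d \<rho> (A # Fs @ [B])"
  shows "trivial_ext d \<rho> [A, B] (A # Fs @ [B]) [0, length Fs + 1]"
  unfolding trivial_ext_def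
proof (intro ballI impI)
  let ?F = "A # Fs @ [B]"
  fix \<alpha> \<beta>1 \<beta>2
  assume "\<beta>1 \<in> histories ?F" "\<beta>2 \<in> histories ?F"
  obtain a1 x1 b1 where
    \<beta>1: "\<beta>1 = a1 # x1 @ [b1]" "a1 < length A" "x1 \<in> histories Fs" "b1 < length B"
    using \<open>\<beta>1 \<in> histories ?F\<close> by (rule histories_Cons_snocE)
  obtain a2 x2 b2 where
    \<beta>2: "\<beta>2 = a2 # x2 @ [b2]" "a2 < length A" "x2 \<in> histories Fs" "b2 < length B"
    using \<open>\<beta>2 \<in> histories ?F\<close> by (rule histories_Cons_snocE)
  assume "hist_prob d \<rho> ?F \<beta>1 \<noteq> 0 \<and> hist_prob d \<rho> ?F \<beta>2 \<noteq> 0 \<and>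
    map (\<lambda>k. \<beta>1 ! ([0, length Fs + 1] ! k)) [0..<length [A, B]] = \<alpha> \<and>
    map (\<lambda>k. \<beta>2 ! ([0, length Fs + 1] ! k)) [0..<length [A, B]] = \<alpha>"
  moreover have "length x1 = length Fs" "length x2 = length Fs"
    using \<beta>1(3) \<beta>2(3) by (simp_all add: histories_def)
  ultimately have prob: "hist_prob d \<rho> ?F \<beta>1 \<noteq> 0" "hist_prob d \<rho> ?F \<beta>2 \<noteq> 0"
    and ends: "a2 = a1" "b2 = b1"
    using \<beta>1(1) \<beta>2(1) by (auto simp: nth_append)
  have "x1 = x2"
    using consistent_history_determined_by_ends[OF \<rho> A B Fs cons \<beta>1(2,4,3) \<beta>2(3)] prob
      \<beta>1(1) \<beta>2(1) ends by simp
  then show "\<beta>1 = \<beta>2" using \<beta>1(1) \<beta>2(1) ends by simp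
qed

theorem lemma2:
  fixes d :: nat and \<rho> :: "complex mat" and \<psi> :: "complex vec list" and \<sigma>2 :: "complex mat list"
  assumes "density d \<rho>"
    and "length \<psi> = d"
    and "\<forall>i<d. \<psi> ! i \<in> carrier_vec d"
    and "\<forall>i<d. \<forall>j<d. \<psi> ! i \<bullet>c \<psi> ! j = (if i = j then 1 else 0)"
    and "\<forall>i<d. \<exists>c. \<rho> *\<^sub>v (\<psi> ! i) = c \<cdot>\<^sub>v (\<psi> ! i)"
    and "ee_set d \<sigma>2"
    and "\<forall>P\<in>set \<sigma>2. rank1_projector d P"
  shows "consistent d \<rho> [map outer \<psi>, \<sigma>2] \<and>
    \<not> (\<exists>\<tau>s. (\<forall>\<tau>\<in>set \<tau>s. ee_set d \<tau>) \<and>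
          nontrivial_consistent_ext d \<rho> [map outer \<psi>, \<sigma>2] (map outer \<psi> # \<tau>s @ [\<sigma>2]) [0, length \<tau>s + 1])"
proof
  have \<rho>: "\<rho> \<in> carrier_mat d d" using assms(1) by (simp add: density_def)
  show "consistent d \<rho> [map outer \<psi>, \<sigma>2]"
    using consistent_eigenbasis_family[OF \<rho> assms(2-6)] .
  have \<sigma>1_ketbra: "\<forall>P\<in>set (map outer \<psi>). \<exists>u v. u \<in> carrier_vec d \<and> v \<in> carrier_vec d \<and> P = ketbra u v"
    using assms(2,3) by (auto simp: in_set_conv_nth outer_eq_ketbra) blast
  have \<sigma>2_ketbra: "\<forall>P\<in>set \<sigma>2. \<exists>u v. u \<in> carrier_vec d \<and> v \<in> carrier_vec d \<and> P = ketbra u v"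
    using assms(7) rank1_projector_ketbra by blast
  show "\<not> (\<exists>\<tau>s. (\<forall>\<tau>\<in>set \<tau>s. ee_set d \<tau>) \<and>
          nontrivial_consistent_ext d \<rho> [map outer \<psi>, \<sigma>2] (map outer \<psi> # \<tau>s @ [\<sigma>2]) [0, length \<tau>s + 1])"
  proof
    assume "\<exists>\<tau>s. (\<forall>\<tau>\<in>set \<tau>s. ee_set d \<tau>) \<and>
          nontrivial_consistent_ext d \<rho> [map outer \<psi>, \<sigma>2] (map outer \<psi> # \<tau>s @ [\<sigma>2]) [0, length \<tau>s + 1]"
    then obtain \<tau>s where \<tau>s: "\<forall>\<tau>\<in>set \<tau>s. ee_set d \<tau>"
      and cons: "consistent d \<rho> (map outer \<psi> # \<tau>s @ [\<sigma>2])"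
      and nontrivial: "\<not> trivial_ext d \<rho> [map outer \<psi>, \<sigma>2] (map outer \<psi> # \<tau>s @ [\<sigma>2]) [0, length \<tau>s + 1]"
      unfolding nontrivial_consistent_ext_def by blast
    have "\<forall>S\<in>set \<tau>s. set S \<subseteq> carrier_mat d d"
      using \<tau>s by (auto simp: ee_set_def projector_def)
    with nontrivial show False
      using consistent_extension_between_rank_one_sets_trivial[OF \<rho> \<sigma>1_ketbra \<sigma>2_ketbra _ cons] by simp
  qed
qed

end
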